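(* Let $0\le\gamma<1$ and let $f\in\mathcal{B}(\Omega_\gamma)$ have the expansion $f(z)=\sum_{n=0}^\infty a_n\left(z+\frac{\gamma}{1-\gamma}\right)^n$ in $\Omega_\gamma$. Define $$\mathcal{C}_f(\rho)=\sum_{n=0}^\infty \frac{1}{n+1}\left(\sum_{k=0}^n\frac{|a_k|}{(1-\gamma)^k}\right)\rho^n,\qquad \rho\in[0,1).$$ Then $$\mathcal{C}_f(\rho)\le \frac{1}{\rho}\log\frac{1}{1-\rho}\qquad\text{for all }\rho\in(0,\rho_0],$$ where $\rho_0\approx 0.533589$ is the unique root in $(0,1)$ of the equation $3(1-\rho)\log(1-\rho)+2\rho=0$. The number $\rho_0$ is best possible: for every $\gamma\in[0,1)$ and every $\rho\in(\rho_0,1)$ there exists $f\in\mathcal{B}(\Omega_\gamma)$ with $\mathcal{C}_f(\rho)>\frac{1}{\rho}\log\frac{1}{1-\rho}$.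
   Context: For $\gamma\in[0,1)$, $\Omega_\gamma=\left\{z\in\mathbb{C}:\left|z+\frac{\gamma}{1-\gamma}\right|<\frac{1}{1-\gamma}\right\}$, the open disk with center $-\frac{\gamma}{1-\gamma}$ and radius $\frac{1}{1-\gamma}$. It contains the unit disk $\mathbb{D}$. The class $\mathcal{B}(\Omega_\gamma)$ consists of all analytic functions $f$ on $\Omega_\gamma$ with $f(\Omega_\gamma)\subseteq\overline{\mathbb{D}}$, that is, $|f|\le 1$ on $\Omega_\gamma$. The map $z\mapsto\gamma+(1-\gamma)z$ sends $\Omega_\gamma$ onto $\mathbb{D}$, and the parameter $\rho$ plays the role of $|\gamma+(1-\gamma)z|$. Since $\Omega_\gamma$ is a disk centered at $-\frac{\gamma}{1-\gamma}$, the Taylor expansion of $f$ about that center converges in all of $\Omega_\gamma$. *)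

theory Defs
  imports "HOL-Analysis.Analysis"
begin

definition Omega :: "real \<Rightarrow> complex set" where
  "Omega \<gamma> = ball (- complex_of_real (\<gamma> / (1 - \<gamma>))) (1 / (1 - \<gamma>))"

definition classB :: "real \<Rightarrow> (complex \<Rightarrow> complex) set" where
  "classB \<gamma> = {f. f analytic_on Omega \<gamma> \<and> (\<forall>z\<in>Omega \<gamma>. norm (f z) \<le> 1)}"

text \<open>C_f(rho), in terms of the coefficient sequence a of the expansion of f about the center.\<close>
definition Cf :: "real \<Rightarrow> (nat \<Rightarrow> complex) \<Rightarrow> real \<Rightarrow> real" where
  "Cf \<gamma> a \<rho> = (\<Sum>n. (1 / real (n + 1)) * (\<Sum>k\<le>n. norm (a k) / (1 - \<gamma>) ^ k) * \<rho> ^ n)"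

definition rho0 :: real where
  "rho0 = (THE \<rho>. 0 < \<rho> \<and> \<rho> < 1 \<and> 3 * (1 - \<rho>) * ln (1 - \<rho>) + 2 * \<rho> = 0)"

end

(*
  Rescaling w = (1 - \<gamma>) (z + \<gamma> / (1 - \<gamma>)) turns f into a power series G(w) = \<Sum> b_n w^n
  bounded by 1 on the unit disk, with |b_n| = |a_n| / (1 - \<gamma>)^n.  For such series
  |b_k| \<le> 2 (1 - |b_0|) when k \<ge> 1; here this is proved without integrals, by averaging G
  over the N-th roots of unity on a circle of radius r < 1 and letting N \<rightarrow> \<infinity>, r \<rightarrow> 1.
  With \<alpha> = |b_0| and L(\<rho>) = (1/\<rho>) log (1/(1 - \<rho>)) = \<Sum> \<rho>^n/(n+1) this gives
    C_f(\<rho>) \<le> \<alpha> L(\<rho>) + 2 (1 - \<alpha>) (1/(1 - \<rho>) - L(\<rho>)) = L(\<rho>) - (1 - \<alpha>) (3 L(\<rho>) - 2/(1 - \<rho>)),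
  which is at most L(\<rho>) for every \<alpha> \<le> 1 iff 3 (1 - \<rho>) log (1 - \<rho>) + 2 \<rho> \<le> 0, i.e. \<rho> \<le> \<rho>_0.
  Conversely the disk automorphisms (\<alpha> - w) / (1 - \<alpha> w) have |b_0| = \<alpha>, |b_k| = (1 - \<alpha>^2) \<alpha>^(k-1),
  and their C_f(\<rho>) exceeds L(\<rho>) by about (1 - \<alpha>) (2/(1 - \<rho>) - 3 L(\<rho>)) as \<alpha> \<rightarrow> 1, which is
  positive for \<rho> > \<rho>_0.
*)

theory Submission
  imports Defs
begin

section \<open>Coefficients of bounded power series\<close>

definition unit_root :: "nat \<Rightarrow> complex" where
  "unit_root N = exp (2 * of_real pi * \<i> / of_nat N)"

lemma unit_root_power: "unit_root N ^ m = exp (2 * of_real pi * \<i> * of_nat m / of_nat N)"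
  by (simp add: unit_root_def flip: exp_of_nat_mult) (simp add: field_simps)

lemma norm_unit_root_power [simp]: "norm (unit_root N ^ m) = 1"
  by (simp add: norm_power unit_root_def)

lemma unit_root_power_eq_1_iff: "0 < N \<Longrightarrow> unit_root N ^ m = 1 \<longleftrightarrow> N dvd m"
  using complex_root_unity_eq_1[of N m] by (simp add: unit_root_power)

lemma unit_root_power_self [simp]: "unit_root N ^ N = 1"
  using unit_root_power_eq_1_iff[of N N] by (cases "N = 0") (auto simp: unit_root_def)

lemma sum_unit_root_powers:
  assumes "0 < N"
  shows "(\<Sum>j<N. unit_root N ^ (j * m)) = (if N dvd m then of_nat N else 0)"
proof -
  have "(\<Sum>j<N. unit_root N ^ (j * m)) = (\<Sum>j<N. (unit_root N ^ m) ^ j)"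
    by (intro sum.cong refl) (metis mult.commute power_mult)
  moreover have "(unit_root N ^ m) ^ N = 1"
    by (metis power_mult power_one mult.commute unit_root_power_self)
  ultimately show ?thesis
    using unit_root_power_eq_1_iff[OF assms, of m] by (cases "N dvd m") (auto simp: geometric_sum)
qed

lemma cnj_unit_root_power:
  assumes "k \<le> N"
  shows "cnj (unit_root N ^ (j * k)) = unit_root N ^ (j * (N - k))"
proof -
  define z where "z = unit_root N ^ (j * k)"
  define w where "w = unit_root N ^ (j * (N - k))"
  have "j * k + j * (N - k) = N * j"
    using assms by (simp add: mult.commute flip: add_mult_distrib2)
  then have "z * w = 1"
    unfolding z_def w_def by (metis power_add power_mult power_one unit_root_power_self)
  moreover have "cnj z * z = 1"
    using complex_norm_square[of z] by (simp add: z_def mult.commute)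
  ultimately have "cnj z = w"
    by (metis mult.assoc mult_1_left mult_1_right)
  then show ?thesis by (simp add: z_def w_def)
qed

lemma sums_root_filter:
  fixes b :: "nat \<Rightarrow> complex"
  assumes sums: "\<And>w. norm w < 1 \<Longrightarrow> (\<lambda>n. b n * w ^ n) sums G w"
    and "0 < N" "norm z < 1"
  shows "(\<lambda>n. if N dvd n + m then b n * z ^ n else 0) sums
           ((\<Sum>j<N. G (z * unit_root N ^ j) * unit_root N ^ (j * m)) / of_nat N)"
proof -
  define \<omega> where "\<omega> = unit_root N"
  have "(\<lambda>n. b n * (z * \<omega> ^ j) ^ n * \<omega> ^ (j * m)) sums (G (z * \<omega> ^ j) * \<omega> ^ (j * m))" for j
    using sums_mult2[OF sums] assms(3) by (simp add: norm_mult \<omega>_def)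
  then have "(\<lambda>n. \<Sum>j<N. b n * (z * \<omega> ^ j) ^ n * \<omega> ^ (j * m)) sums
               (\<Sum>j<N. G (z * \<omega> ^ j) * \<omega> ^ (j * m))"
    by (rule sums_sum)
  moreover have "(\<Sum>j<N. b n * (z * \<omega> ^ j) ^ n * \<omega> ^ (j * m)) =
                   of_nat N * (if N dvd n + m then b n * z ^ n else 0)" for n
  proof -
    have "(\<Sum>j<N. b n * (z * \<omega> ^ j) ^ n * \<omega> ^ (j * m)) = b n * z ^ n * (\<Sum>j<N. \<omega> ^ (j * (n + m)))"
      by (simp add: sum_distrib_left power_mult_distrib power_add algebra_simps flip: power_mult)
    then show ?thesis
      using sum_unit_root_powers[OF \<open>0 < N\<close>, of "n + m"] by (simp add: \<omega>_def)
  qed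
  ultimately have "(\<lambda>n. of_nat N * (if N dvd n + m then b n * z ^ n else 0)) sums
                     (\<Sum>j<N. G (z * \<omega> ^ j) * \<omega> ^ (j * m))"
    by simp
  from sums_divide[OF this, of "of_nat N"] show ?thesis
    using \<open>0 < N\<close> by (simp add: \<omega>_def)
qed

lemma norm_sums_minus_partial_le:
  fixes f :: "nat \<Rightarrow> 'a::banach"
  assumes "f sums s" "\<And>n. norm (f n) \<le> g n" "summable g"
  shows "norm (s - (\<Sum>n<M. f n)) \<le> (\<Sum>i. g (i + M))"
proof -
  have "(\<lambda>i. f (i + M)) sums (s - (\<Sum>n<M. f n))"
    using assms(1) by (simp add: sums_iff_shift')
  then show ?thesis
    using norm_suminf_le[of "\<lambda>i. f (i + M)" "\<lambda>i. g (i + M)"] assms(2,3)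
    by (simp add: sums_iff summable_ignore_initial_segment)
qed

text \<open>A discrete Caratheodory inequality: adding the conjugate turns \<open>g\<close> into \<open>2 Re g\<close>,
  and the constant \<open>2\<close> can be subtracted because the roots of unity sum to zero.\<close>

lemma norm_root_filter_add_cnj_le:
  fixes g :: "nat \<Rightarrow> complex"
  assumes "0 < k" "k < N" "\<And>j. j < N \<Longrightarrow> Re (g j) \<le> 1"
  shows "norm ((\<Sum>j<N. g j * unit_root N ^ (j * (N - k))) + cnj (\<Sum>j<N. g j * unit_root N ^ (j * k)))
           \<le> 2 * (of_nat N - Re (\<Sum>j<N. g j))"
proof -
  define \<omega> where "\<omega> j = unit_root N ^ (j * (N - k))" for j
  have "\<not> N dvd N - k"
    using assms(1,2) by (auto dest: dvd_imp_le)
  then have "(\<Sum>j<N. \<omega> j) = 0"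
    using sum_unit_root_powers[of N "N - k"] assms(2) by (simp add: \<omega>_def)
  have "cnj (\<Sum>j<N. g j * unit_root N ^ (j * k)) = (\<Sum>j<N. cnj (g j) * \<omega> j)"
    using assms(2) by (simp add: cnj_unit_root_power \<omega>_def flip: complex_cnj_power)
  then have "(\<Sum>j<N. g j * \<omega> j) + cnj (\<Sum>j<N. g j * unit_root N ^ (j * k))
               = (\<Sum>j<N. (g j + cnj (g j)) * \<omega> j) - 2 * (\<Sum>j<N. \<omega> j)"
    using \<open>(\<Sum>j<N. \<omega> j) = 0\<close> by (simp add: sum.distrib distrib_right)
  also have "\<dots> = (\<Sum>j<N. of_real (2 * Re (g j)) * \<omega> j) - 2 * (\<Sum>j<N. \<omega> j)"
    by (simp only: complex_add_cnj)
  also have "\<dots> = (\<Sum>j<N. of_real (2 * Re (g j) - 2) * \<omega> j)"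
    by (simp add: sum_distrib_left algebra_simps flip: sum_subtractf)
  also have "norm \<dots> \<le> (\<Sum>j<N. norm (of_real (2 * Re (g j) - 2) * \<omega> j))"
    by (rule norm_sum)
  also have "\<dots> = (\<Sum>j<N. 2 - 2 * Re (g j))"
    using assms(3) by (intro sum.cong refl) (simp add: \<omega>_def norm_mult del: of_real_diff)
  also have "\<dots> = 2 * (of_nat N - Re (\<Sum>j<N. g j))"
    by (simp add: sum_subtractf Re_sum sum_distrib_left)
  finally show ?thesis by (simp add: \<omega>_def)
qed

lemma summable_norm_powser_inside:
  fixes b :: "nat \<Rightarrow> complex"
  assumes "\<And>w. norm w < 1 \<Longrightarrow> (\<lambda>n. b n * w ^ n) sums G w" "0 \<le> r" "r < 1"
  shows "summable (\<lambda>n. norm (b n * of_real r ^ n))"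
proof -
  have "norm (of_real ((1 + r) / 2) :: complex) < 1"
    and "norm (of_real r :: complex) < norm (of_real ((1 + r) / 2) :: complex)"
    using assms(2,3) by (simp_all only: norm_of_real) auto
  then show ?thesis
    using assms(1) sums_summable powser_insidea by metis
qed

lemma norm_root_filter_minus_partial_le:
  fixes b :: "nat \<Rightarrow> complex"
  assumes sums: "\<And>w. norm w < 1 \<Longrightarrow> (\<lambda>n. b n * w ^ n) sums G w"
    and "0 < N" "0 \<le> r" "r < 1"
  shows "norm ((\<Sum>j<N. G (of_real r * unit_root N ^ j) * unit_root N ^ (j * m)) / of_nat N
              - (\<Sum>n<M. if N dvd n + m then b n * of_real r ^ n else 0))
           \<le> (\<Sum>i. norm (b (i + M) * of_real r ^ (i + M)))"
proof (rule norm_sums_minus_partial_le)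
  show "(\<lambda>n. if N dvd n + m then b n * of_real r ^ n else 0) sums
          ((\<Sum>j<N. G (of_real r * unit_root N ^ j) * unit_root N ^ (j * m)) / of_nat N)"
    by (rule sums_root_filter[OF sums \<open>0 < N\<close>]) (use assms(3,4) in auto)
  show "summable (\<lambda>n. norm (b n * of_real r ^ n))"
    using sums assms(3,4) by (rule summable_norm_powser_inside)
qed simp

lemma root_filter_partial_sums:
  fixes c :: "nat \<Rightarrow> 'a::comm_monoid_add"
  assumes "0 < k" "2 * k < N"
  shows "(\<Sum>n<N - k. if N dvd n + (N - k) then c n else 0) = c k"
    and "(\<Sum>n<N - k. if N dvd n + k then c n else 0) = 0"
    and "(\<Sum>n<N - k. if N dvd n + 0 then c n else 0) = c 0"
proof -
  have "k < N - k"
    using assms(2) by linarith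
  have "N dvd n + (N - k) \<longleftrightarrow> n = k" if "n < N - k" for n
  proof
    assume "N dvd n + (N - k)"
    then obtain q where q: "n + (N - k) = N * q"
      by (auto simp: dvd_def)
    have "N * q < N * 2"
      using that q by linarith
    then have "q < 2"
      by simp
    moreover have "q \<noteq> 0"
      using q assms(2) by (intro notI) simp
    ultimately have "q = 1"
      by linarith
    with q show "n = k"
      using assms(2) by simp
  qed (use assms(2) in simp)
  then have "(\<Sum>n<N - k. if N dvd n + (N - k) then c n else 0) = (\<Sum>n<N - k. if n = k then c n else 0)"
    by (intro sum.cong) auto
  also have "\<dots> = c k"
    using \<open>k < N - k\<close> by simp
  finally show "(\<Sum>n<N - k. if N dvd n + (N - k) then c n else 0) = c k" .
  have "\<not> N dvd n + k" if "n < N - k" for n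
    using that assms(1) by (auto dest: dvd_imp_le)
  then show "(\<Sum>n<N - k. if N dvd n + k then c n else 0) = 0"
    by simp
  have "N dvd n \<longleftrightarrow> n = 0" if "n < N - k" for n
    using that by (auto dest: dvd_imp_le)
  then have "(\<Sum>n<N - k. if N dvd n + 0 then c n else 0) = (\<Sum>n<N - k. if n = 0 then c n else 0)"
    by (intro sum.cong) auto
  also have "\<dots> = c 0"
    using assms(2) by simp
  finally show "(\<Sum>n<N - k. if N dvd n + 0 then c n else 0) = c 0" .
qed

lemma norm_coeff_mult_radius_le:
  fixes b :: "nat \<Rightarrow> complex"
  assumes sums: "\<And>w. norm w < 1 \<Longrightarrow> (\<lambda>n. b n * w ^ n) sums G w"
    and re: "\<And>w. norm w < 1 \<Longrightarrow> Re (G w) \<le> 1"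
    and "0 < k" "0 < r" "r < 1"
  shows "norm (b k) * r ^ k \<le> 2 * (1 - Re (b 0))"
proof (rule field_le_epsilon)
  fix e :: real
  assume "0 < e"
  define c where "c n = b n * of_real r ^ n" for n
  have "summable (\<lambda>n. norm (c n))"
    unfolding c_def using sums by (rule summable_norm_powser_inside) (use assms(4,5) in auto)
  then obtain M where M: "\<And>n. M \<le> n \<Longrightarrow> norm (\<Sum>i. norm (c (i + n))) < e / 4"
    using suminf_exist_split[of "e / 4" "\<lambda>n. norm (c n)"] \<open>0 < e\<close> by auto
  define N where "N = M + 2 * k + 1"
  have "0 < N" "2 * k < N" "M \<le> N - k"
    by (simp_all add: N_def)
  define T where "T = (\<Sum>i. norm (c (i + (N - k))))"
  have "T < e / 4"
    using M[OF \<open>M \<le> N - k\<close>] by (simp add: T_def)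
  define S where "S m = (\<Sum>j<N. G (of_real r * unit_root N ^ j) * unit_root N ^ (j * m))" for m
  have filter: "norm (S m / of_nat N - (\<Sum>n<N - k. if N dvd n + m then c n else 0)) \<le> T" for m
    unfolding S_def T_def c_def using assms(4,5)
    by (intro norm_root_filter_minus_partial_le[OF sums \<open>0 < N\<close>]) auto
  define A where "A = S (N - k) / of_nat N"
  define B where "B = S k / of_nat N"
  define C where "C = S 0 / of_nat N"
  note partial_sums = root_filter_partial_sums[OF \<open>0 < k\<close> \<open>2 * k < N\<close>, of c]
  have A: "norm (A - c k) \<le> T" and B: "norm B \<le> T" and C: "norm (C - c 0) \<le> T"
    using filter[of "N - k", unfolded partial_sums(1)] filter[of k, unfolded partial_sums(2)]
      filter[of 0, unfolded partial_sums(3)]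
    by (simp_all add: A_def B_def C_def)
  have "norm (S (N - k) + cnj (S k)) \<le> 2 * (of_nat N - Re (S 0))"
  proof -
    have "Re (G (of_real r * unit_root N ^ j)) \<le> 1" for j
      using \<open>0 < r\<close> \<open>r < 1\<close> by (intro re) (simp add: norm_mult)
    then show ?thesis
      using norm_root_filter_add_cnj_le[of k N "\<lambda>j. G (of_real r * unit_root N ^ j)"] \<open>0 < k\<close> \<open>2 * k < N\<close>
      by (simp add: S_def)
  qed
  then have "norm (A + cnj B) \<le> 2 * (1 - Re C)"
    using \<open>0 < N\<close> by (simp add: A_def B_def C_def norm_divide field_simps flip: add_divide_distrib)
  moreover have "Re (c 0) - Re C \<le> T"
    using C abs_Re_le_cmod[of "C - c 0"] by simp
  moreover have "norm (c k) \<le> norm (A + cnj B) + norm B + T"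
    using A norm_triangle_ineq4[of "A + cnj B" "cnj B"] norm_triangle_ineq3[of "c k" A]
    by (simp add: norm_minus_commute)
  ultimately have "norm (c k) \<le> 2 * (1 - Re (c 0)) + 4 * T"
    using B by argo
  then show "norm (b k) * r ^ k \<le> 2 * (1 - Re (b 0)) + e"
    using \<open>T < e / 4\<close> \<open>0 < r\<close> by (simp add: c_def norm_mult norm_power)
qed

lemma Caratheodory_coeff_bound:
  fixes b :: "nat \<Rightarrow> complex"
  assumes "\<And>w. norm w < 1 \<Longrightarrow> (\<lambda>n. b n * w ^ n) sums G w"
    and "\<And>w. norm w < 1 \<Longrightarrow> Re (G w) \<le> 1"
    and "0 < k"
  shows "norm (b k) \<le> 2 * (1 - Re (b 0))"
proof -
  have "\<forall>\<^sub>F r in at_left 1. norm (b k) * r ^ k \<le> 2 * (1 - Re (b 0))"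
    using eventually_at_left_real[of 0 "1::real"]
    by (rule eventually_mono) (use norm_coeff_mult_radius_le[OF assms] in auto)
  moreover have "((\<lambda>r. norm (b k) * r ^ k) \<longlongrightarrow> norm (b k) * 1 ^ k) (at_left (1::real))"
    by (intro tendsto_intros)
  ultimately show ?thesis
    using tendsto_upperbound by fastforce
qed

lemma bounded_powser_coeff_bound:
  fixes b :: "nat \<Rightarrow> complex"
  assumes sums: "\<And>w. norm w < 1 \<Longrightarrow> (\<lambda>n. b n * w ^ n) sums G w"
    and bounded: "\<And>w. norm w < 1 \<Longrightarrow> norm (G w) \<le> 1"
    and "0 < k"
  shows "norm (b k) \<le> 2 * (1 - norm (b 0))"
proof -
  obtain u where u: "norm u = 1" "u * b 0 = of_real (norm (b 0))"
  proof (cases "b 0 = 0")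
    case False
    have "cnj (b 0) * b 0 = of_real (norm (b 0)) * of_real (norm (b 0))"
      by (simp add: mult.commute power2_eq_square flip: complex_norm_square)
    then show ?thesis
      using False by (intro that[of "cnj (b 0) / of_real (norm (b 0))"]) (simp_all add: norm_divide)
  qed (use that[of 1] in simp)
  have "(\<lambda>n. (u * b n) * w ^ n) sums (u * G w)" if "norm w < 1" for w
    using sums_mult[OF sums[OF that], of u] by (simp add: mult.assoc)
  moreover have "Re (u * G w) \<le> 1" if "norm w < 1" for w
    using complex_Re_le_cmod[of "u * G w"] bounded[OF that] u(1) by (simp add: norm_mult)
  ultimately have "norm (u * b k) \<le> 2 * (1 - Re (u * b 0))"
    using \<open>0 < k\<close> by (rule Caratheodory_coeff_bound)
  then show ?thesis
    using u by (simp add: norm_mult)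
qed

section \<open>The bound \<open>(1/\<rho>) log (1/(1 - \<rho>))\<close> and the constant \<open>\<rho>\<^sub>0\<close>\<close>

definition log_ratio :: "real \<Rightarrow> real" where
  "log_ratio x = (1 / x) * ln (1 / (1 - x))"

lemma log_ratio_sums:
  assumes "0 < x" "x < 1"
  shows "(\<lambda>n. x ^ n / real (n + 1)) sums log_ratio x"
proof -
  have "(\<lambda>n. - (x ^ n / real n)) sums ln (1 - x)"
    using ln_series'[of "- x"] assms by simp
  from sums_minus[OF this] have "(\<lambda>n. x ^ n / real n) sums ln (1 / (1 - x))"
    using assms by (simp add: ln_div)
  then have "(\<lambda>n. x ^ Suc n / real (Suc n)) sums ln (1 / (1 - x))"
    by (subst sums_Suc_iff) simp
  from sums_divide[OF this, of x] show ?thesis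
    using assms by (simp add: log_ratio_def)
qed

lemma log_ratio_complement_sums:
  assumes "0 < x" "x < 1"
  shows "(\<lambda>n. real n * x ^ n / real (n + 1)) sums (1 / (1 - x) - log_ratio x)"
proof -
  have "(\<lambda>n. x ^ n - x ^ n / real (n + 1)) sums (1 / (1 - x) - log_ratio x)"
    using assms by (intro sums_diff geometric_sums log_ratio_sums) auto
  moreover have "x ^ n - x ^ n / real (n + 1) = real n * x ^ n / real (n + 1)" for n
    by (simp add: field_simps)
  ultimately show ?thesis
    by simp
qed

definition crit :: "real \<Rightarrow> real" where
  "crit x = 3 * (1 - x) * ln (1 - x) + 2 * x"

lemma crit_has_derivative: "x < 1 \<Longrightarrow> (crit has_real_derivative (- 3 * ln (1 - x) - 1)) (at x)"
  unfolding crit_def by (rule derivative_eq_intros refl | simp)+ (simp add: field_simps)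

lemma continuous_on_crit: "b < 1 \<Longrightarrow> continuous_on {a..b} crit"
  by (rule DERIV_atLeastAtMost_imp_continuous_on) (metis crit_has_derivative le_less_trans)

lemma crit_strict_antimono:
  assumes "a < b" "b \<le> 1 - exp (- 1 / 3)"
  shows "crit b < crit a"
proof (rule DERIV_neg_imp_decreasing_open[OF assms(1)])
  show "continuous_on {a..b} crit"
    using assms by (intro continuous_on_crit) (smt (verit) exp_gt_zero)
next
  fix x
  assume x: "a < x" "x < b"
  then have "exp (- 1 / 3) < 1 - x"
    using assms by simp
  then have "- 1 / 3 < ln (1 - x)"
    by (metis exp_gt_zero less_trans ln_exp ln_less_cancel_iff)
  moreover have "x < 1"
    using x assms by (smt (verit) exp_gt_zero)
  ultimately show "\<exists>y. (crit has_real_derivative y) (at x) \<and> y < 0"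
    using crit_has_derivative by fastforce
qed

lemma crit_strict_mono:
  assumes "1 - exp (- 1 / 3) \<le> a" "a < b" "b < 1"
  shows "crit a < crit b"
proof (rule DERIV_pos_imp_increasing_open[OF assms(2)])
  show "continuous_on {a..b} crit"
    using assms by (intro continuous_on_crit)
next
  fix x
  assume x: "a < x" "x < b"
  then have "1 - x < exp (- 1 / 3)" "0 < 1 - x"
    using assms by auto
  then have "ln (1 - x) < - 1 / 3"
    by (metis ln_exp ln_less_cancel_iff exp_gt_zero)
  moreover have "x < 1"
    using x assms by simp
  ultimately show "\<exists>y. (crit has_real_derivative y) (at x) \<and> y > 0"
    using crit_has_derivative by fastforce
qed

lemma exp_two_gt_four: "4 < exp (2 :: real)"
proof -
  have "(3 / 2) ^ 4 \<le> exp (1 / 2 :: real) ^ 4"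
    using exp_ge_add_one_self[of "1 / 2 :: real"] by (intro power_mono) simp_all
  also have "\<dots> = exp 2"
    by (simp flip: exp_of_nat_mult)
  finally show ?thesis
    by (simp add: eval_nat_numeral)
qed

text \<open>\<^const>\<open>crit\<close> falls from \<open>crit 0 = 0\<close> until \<open>1 - exp (-1/3)\<close> and then rises, reaching
  \<open>2 - 8 exp (-2) > 0\<close> at \<open>1 - exp (-2)\<close>; so it has exactly one zero in \<open>(0, 1)\<close>.\<close>

lemma rho0_root: "0 < rho0" "rho0 < 1" "crit rho0 = 0" "1 - exp (- 1 / 3) < rho0"
proof -
  define m :: real where "m = 1 - exp (- 1 / 3)"
  define p :: real where "p = 1 - exp (- 2)"
  have "0 < m" "m < p" "p < 1"
    by (simp_all add: m_def p_def)
  have "crit m < 0"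
    using crit_strict_antimono[of 0 m] \<open>0 < m\<close> by (simp add: m_def crit_def)
  have "exp (- 2) < (1 / 4 :: real)"
    using exp_two_gt_four by (simp add: exp_minus inverse_eq_divide field_simps)
  then have "0 < crit p"
    by (simp add: crit_def p_def)
  obtain r where r: "m \<le> r" "r \<le> p" "crit r = 0"
    using IVT'[of crit m 0 p] \<open>crit m < 0\<close> \<open>0 < crit p\<close> \<open>m < p\<close> continuous_on_crit[OF \<open>p < 1\<close>]
    by force
  then have "m < r"
    using \<open>crit m < 0\<close> by (cases "r = m") auto
  have "x = r" if "0 < x" "x < 1" "crit x = 0" for x
  proof -
    have "m < x"
      using crit_strict_antimono[of 0 x] that by (force simp: m_def crit_def)
    then show ?thesis
      using crit_strict_mono[of x r] crit_strict_mono[of r x] \<open>m < r\<close> r that \<open>p < 1\<close>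
      by (smt (verit, best) m_def)
  qed
  then have "rho0 = r"
    unfolding rho0_def crit_def[symmetric]
    using \<open>0 < m\<close> \<open>m < r\<close> \<open>p < 1\<close> r by (intro the_equality) auto
  then show "0 < rho0" "rho0 < 1" "crit rho0 = 0" "1 - exp (- 1 / 3) < rho0"
    using \<open>0 < m\<close> \<open>m < r\<close> \<open>p < 1\<close> r unfolding m_def [symmetric] by simp_all
qed

lemma crit_nonpos_iff:
  assumes "0 < x" "x < 1"
  shows "crit x \<le> 0 \<longleftrightarrow> x \<le> rho0"
proof
  assume "x \<le> rho0"
  show "crit x \<le> 0"
  proof (cases "x \<le> 1 - exp (- 1 / 3)")
    case True
    then show ?thesis
      using crit_strict_antimono[of 0 x] assms by (simp add: crit_def)
  next
    case False
    then show ?thesis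
      using crit_strict_mono[of x rho0] rho0_root \<open>x \<le> rho0\<close> by (cases "x = rho0") auto
  qed
next
  assume "crit x \<le> 0"
  then show "x \<le> rho0"
    using crit_strict_mono[of rho0 x] rho0_root assms by (cases "x \<le> rho0") auto
qed

lemma crit_eq_log_ratio:
  assumes "0 < x" "x < 1"
  shows "crit x = x * (1 - x) * (2 / (1 - x) - 3 * log_ratio x)"
  using assms by (simp add: crit_def log_ratio_def ln_div field_simps)

lemma log_ratio_bound_iff_le_rho0:
  assumes "0 < x" "x < 1"
  shows "2 / (1 - x) \<le> 3 * log_ratio x \<longleftrightarrow> x \<le> rho0"
proof -
  have "0 < x * (1 - x)"
    using assms by simp
  then have "crit x \<le> 0 \<longleftrightarrow> 2 / (1 - x) - 3 * log_ratio x \<le> 0"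
    using mult_le_cancel_left_pos[of "x * (1 - x)" _ 0] crit_eq_log_ratio[OF assms] by simp
  then show ?thesis
    using crit_nonpos_iff[OF assms] by simp
qed

section \<open>Cesaro means of coefficient moduli\<close>

lemma Cesaro_series_le:
  fixes \<beta> :: "nat \<Rightarrow> real"
  assumes "\<And>k. 0 \<le> \<beta> k" "\<And>n. (\<Sum>k\<le>n. \<beta> k) \<le> p + q * real n" "0 < x" "x < 1"
  shows "(\<Sum>n. 1 / real (n + 1) * (\<Sum>k\<le>n. \<beta> k) * x ^ n)
           \<le> p * log_ratio x + q * (1 / (1 - x) - log_ratio x)"
proof -
  define u where "u n = p * (x ^ n / real (n + 1)) + q * (real n * x ^ n / real (n + 1))" for n
  have u_sums: "u sums (p * log_ratio x + q * (1 / (1 - x) - log_ratio x))"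
    unfolding u_def using assms(3,4)
    by (intro sums_add sums_mult log_ratio_sums log_ratio_complement_sums)
  have le_u: "1 / real (n + 1) * (\<Sum>k\<le>n. \<beta> k) * x ^ n \<le> u n" for n
  proof -
    have "1 / real (n + 1) * (\<Sum>k\<le>n. \<beta> k) * x ^ n \<le> 1 / real (n + 1) * (p + q * real n) * x ^ n"
      using assms(2,3) by (intro mult_right_mono mult_left_mono) auto
    also have "\<dots> = u n"
      by (simp add: u_def add_divide_distrib distrib_right)
    finally show ?thesis .
  qed
  have "summable (\<lambda>n. 1 / real (n + 1) * (\<Sum>k\<le>n. \<beta> k) * x ^ n)"
  proof (rule summable_comparison_test'[OF sums_summable[OF u_sums]])
    show "norm (1 / real (n + 1) * (\<Sum>k\<le>n. \<beta> k) * x ^ n) \<le> u n" for n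
      using le_u[of n] assms(1,3) by (simp add: sum_nonneg)
  qed
  then show ?thesis
    using suminf_le[OF le_u _ sums_summable[OF u_sums]] u_sums by (simp add: sums_iff)
qed

lemma Cesaro_series_ge:
  fixes \<beta> :: "nat \<Rightarrow> real"
  assumes "\<And>k. 0 \<le> \<beta> k" "\<And>k. \<beta> k \<le> 1" "\<And>n. p + q * real n * y ^ n \<le> (\<Sum>k\<le>n. \<beta> k)"
    and "0 < x" "x < 1" "0 < y" "y \<le> 1"
  shows "p * log_ratio x + q * (1 / (1 - x * y) - log_ratio (x * y))
           \<le> (\<Sum>n. 1 / real (n + 1) * (\<Sum>k\<le>n. \<beta> k) * x ^ n)"
proof -
  have "x * y \<le> x"
    using assms(4,7) by (simp add: mult_left_le)
  then have "x * y < 1"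
    using assms(5) by linarith
  have "0 < x * y"
    using assms(4,6) by simp
  define v where "v n = p * (x ^ n / real (n + 1)) + q * (real n * (x * y) ^ n / real (n + 1))" for n
  have v_sums: "v sums (p * log_ratio x + q * (1 / (1 - x * y) - log_ratio (x * y)))"
    unfolding v_def using assms(4,5) \<open>0 < x * y\<close> \<open>x * y < 1\<close>
    by (intro sums_add sums_mult log_ratio_sums log_ratio_complement_sums)
  have ge_v: "v n \<le> 1 / real (n + 1) * (\<Sum>k\<le>n. \<beta> k) * x ^ n" for n
  proof -
    have "v n = 1 / real (n + 1) * (p + q * real n * y ^ n) * x ^ n"
      by (simp add: v_def divide_simps power_mult_distrib) (simp add: algebra_simps)
    also have "\<dots> \<le> 1 / real (n + 1) * (\<Sum>k\<le>n. \<beta> k) * x ^ n"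
      using assms(3,4) by (intro mult_right_mono mult_left_mono) auto
    finally show ?thesis .
  qed
  have nonneg: "0 \<le> 1 / real (n + 1) * (\<Sum>k\<le>n. \<beta> k) * x ^ n" for n
    using assms(1,4) by (simp add: sum_nonneg)
  have le_geometric: "1 / real (n + 1) * (\<Sum>k\<le>n. \<beta> k) * x ^ n \<le> x ^ n" for n
  proof -
    have "(\<Sum>k\<le>n. \<beta> k) \<le> real (n + 1)"
      using sum_mono[of "{..n}" \<beta> "\<lambda>_. 1"] assms(2) by simp
    then have "1 / real (n + 1) * (\<Sum>k\<le>n. \<beta> k) \<le> 1"
      by (simp add: divide_le_eq)
    then show ?thesis
      using assms(1,4) by (intro mult_left_le_one_le) (simp_all add: sum_nonneg)
  qed
  have "summable (\<lambda>n. 1 / real (n + 1) * (\<Sum>k\<le>n. \<beta> k) * x ^ n)"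
  proof (rule summable_comparison_test'[OF summable_geometric[of x]])
    show "norm x < 1"
      using assms(4,5) by simp
    show "norm (1 / real (n + 1) * (\<Sum>k\<le>n. \<beta> k) * x ^ n) \<le> x ^ n" for n
      using nonneg[of n] le_geometric[of n] by simp
  qed
  then show ?thesis
    using suminf_le[OF ge_v sums_summable[OF v_sums]] v_sums by (simp add: sums_iff)
qed

section \<open>The inequality and its sharpness\<close>

lemma mem_Omega_iff:
  assumes "\<gamma> < 1"
  shows "z \<in> Omega \<gamma> \<longleftrightarrow> norm (of_real (1 - \<gamma>) * (z + of_real (\<gamma> / (1 - \<gamma>)))) < 1"
proof -
  define c where "c = complex_of_real (\<gamma> / (1 - \<gamma>))"
  have "dist (- c) z = norm (z + c)"
    using norm_minus_cancel[of "z + c"] by (simp add: dist_norm algebra_simps)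
  then have "z \<in> Omega \<gamma> \<longleftrightarrow> norm (z + c) < 1 / (1 - \<gamma>)"
    unfolding Omega_def c_def [symmetric] by simp
  moreover have "norm (of_real (1 - \<gamma>) * (z + c)) = (1 - \<gamma>) * norm (z + c)"
    using assms by (simp only: norm_mult norm_of_real)
  ultimately show ?thesis
    unfolding c_def [symmetric] using assms by (simp add: pos_less_divide_eq mult.commute)
qed

lemma classB_disk_series:
  assumes "\<gamma> < 1" "f \<in> classB \<gamma>"
    and "\<forall>z\<in>Omega \<gamma>. (\<lambda>n. a n * (z + of_real (\<gamma> / (1 - \<gamma>))) ^ n) sums f z"
  obtains G where "\<And>w. norm w < 1 \<Longrightarrow> (\<lambda>n. a n / of_real ((1 - \<gamma>) ^ n) * w ^ n) sums G w"
    and "\<And>w. norm w < 1 \<Longrightarrow> norm (G w) \<le> 1"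
proof
  define c where "c = complex_of_real (\<gamma> / (1 - \<gamma>))"
  define d where "d = complex_of_real (1 - \<gamma>)"
  have "d \<noteq> 0"
    using assms(1) by (simp add: d_def)
  fix w :: complex
  assume "norm w < 1"
  moreover have "d * (w / d - c + c) = w"
    using \<open>d \<noteq> 0\<close> by simp
  ultimately have z: "w / d - c \<in> Omega \<gamma>"
    using mem_Omega_iff[OF assms(1)] by (simp only: c_def d_def)
  then show "norm (f (w / d - c)) \<le> 1"
    using assms(2) by (simp add: classB_def)
  have "(\<lambda>n. a n * (w / d - c + c) ^ n) sums f (w / d - c)"
    using bspec[OF assms(3) z] by (simp only: c_def)
  then show "(\<lambda>n. a n / of_real ((1 - \<gamma>) ^ n) * w ^ n) sums f (w / d - c)"
    by (simp add: power_divide d_def del: of_real_diff)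
qed

lemma Cf_le_log_ratio:
  assumes "\<gamma> < 1" "f \<in> classB \<gamma>"
    and "\<forall>z\<in>Omega \<gamma>. (\<lambda>n. a n * (z + of_real (\<gamma> / (1 - \<gamma>))) ^ n) sums f z"
    and "0 < \<rho>" "\<rho> \<le> rho0"
  shows "Cf \<gamma> a \<rho> \<le> log_ratio \<rho>"
proof -
  have "\<rho> < 1"
    using assms(5) rho0_root by linarith
  obtain G where G_sums: "\<And>w. norm w < 1 \<Longrightarrow> (\<lambda>n. a n / of_real ((1 - \<gamma>) ^ n) * w ^ n) sums G w"
    and G_bounded: "\<And>w. norm w < 1 \<Longrightarrow> norm (G w) \<le> 1"
    using classB_disk_series[OF assms(1-3)] by blast
  define \<beta> where "\<beta> k = norm (a k) / (1 - \<gamma>) ^ k" for k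
  have \<beta>_eq: "\<beta> k = norm (a k / of_real ((1 - \<gamma>) ^ k))" for k
    using assms(1) by (simp only: \<beta>_def norm_divide norm_of_real) simp
  define \<alpha> where "\<alpha> = \<beta> 0"
  have "G 0 = a 0"
    using sums_unique2[OF G_sums[of 0] powser_sums_zero] by simp
  then have "\<alpha> \<le> 1"
    using G_bounded[of 0] by (simp add: \<alpha>_def \<beta>_def)
  have \<beta>_le: "\<beta> k \<le> 2 * (1 - \<alpha>)" if "0 < k" for k
    unfolding \<alpha>_def \<beta>_eq using G_sums G_bounded that by (rule bounded_powser_coeff_bound)
  have "(\<Sum>k\<le>n. \<beta> k) \<le> \<alpha> + 2 * (1 - \<alpha>) * real n" for n
  proof (induction n)
    case (Suc n)
    then show ?case
      using \<beta>_le[of "Suc n"] by (simp add: algebra_simps)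
  qed (simp add: \<alpha>_def)
  then have "Cf \<gamma> a \<rho> \<le> \<alpha> * log_ratio \<rho> + 2 * (1 - \<alpha>) * (1 / (1 - \<rho>) - log_ratio \<rho>)"
    unfolding Cf_def \<beta>_def[symmetric] using assms(1,4) \<open>\<rho> < 1\<close>
    by (intro Cesaro_series_le) (simp_all add: \<beta>_def)
  also have "\<dots> = log_ratio \<rho> - (1 - \<alpha>) * (3 * log_ratio \<rho> - 2 / (1 - \<rho>))"
    by (simp add: algebra_simps add_divide_distrib [symmetric])
  also have "\<dots> \<le> log_ratio \<rho>"
    using log_ratio_bound_iff_le_rho0[OF assms(4) \<open>\<rho> < 1\<close>] assms(5) \<open>\<alpha> \<le> 1\<close> by simp
  finally show ?thesis .
qed

definition blaschke :: "real \<Rightarrow> complex \<Rightarrow> complex" where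
  "blaschke \<alpha> w = (of_real \<alpha> - w) / (1 - of_real \<alpha> * w)"

definition blaschke_coeff :: "real \<Rightarrow> nat \<Rightarrow> complex" where
  "blaschke_coeff \<alpha> n = (case n of 0 \<Rightarrow> of_real \<alpha> | Suc m \<Rightarrow> - of_real ((1 - \<alpha>\<^sup>2) * \<alpha> ^ m))"

lemma norm_of_real_mult_lt_1:
  fixes w :: complex
  assumes "norm w < 1" "0 \<le> \<alpha>" "\<alpha> < 1"
  shows "norm (of_real \<alpha> * w) < 1"
proof -
  have "norm (of_real \<alpha> * w) \<le> norm w"
    using assms(2,3) by (simp add: norm_mult mult_left_le_one_le)
  then show ?thesis
    using assms(1) by linarith
qed

lemma blaschke_sums:
  assumes "norm w < 1" "0 \<le> \<alpha>" "\<alpha> < 1"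
  shows "(\<lambda>n. blaschke_coeff \<alpha> n * w ^ n) sums blaschke \<alpha> w"
proof -
  have "norm (of_real \<alpha> * w) < 1"
    using assms by (rule norm_of_real_mult_lt_1)
  then have "1 - of_real \<alpha> * w \<noteq> 0"
    by auto
  from \<open>norm (of_real \<alpha> * w) < 1\<close>
  have "(\<lambda>n. (- of_real (1 - \<alpha>\<^sup>2) * w) * (of_real \<alpha> * w) ^ n) sums
          ((- of_real (1 - \<alpha>\<^sup>2) * w) * (1 / (1 - of_real \<alpha> * w)))"
    by (intro sums_mult geometric_sums)
  also have "(\<lambda>n. (- of_real (1 - \<alpha>\<^sup>2) * w) * (of_real \<alpha> * w) ^ n)
               = (\<lambda>n. blaschke_coeff \<alpha> (Suc n) * w ^ Suc n)"
    by (simp add: blaschke_coeff_def power_mult_distrib algebra_simps)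
  finally have "(\<lambda>n. blaschke_coeff \<alpha> n * w ^ n) sums
                  ((- of_real (1 - \<alpha>\<^sup>2) * w) * (1 / (1 - of_real \<alpha> * w)) + blaschke_coeff \<alpha> 0 * w ^ 0)"
    by (subst (asm) sums_Suc_iff)
  also have "\<dots> = blaschke \<alpha> w"
    using \<open>1 - of_real \<alpha> * w \<noteq> 0\<close>
    by (simp add: blaschke_def blaschke_coeff_def field_simps power2_eq_square)
  finally show ?thesis .
qed

lemma norm_blaschke_le_1:
  assumes "norm w < 1" "0 \<le> \<alpha>" "\<alpha> < 1"
  shows "norm (blaschke \<alpha> w) \<le> 1"
proof -
  have "(norm (of_real \<alpha> - w))\<^sup>2 = (\<alpha> - Re w)\<^sup>2 + (Im w)\<^sup>2"
    by (simp add: cmod_power2)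
  also have "\<dots> \<le> (1 - \<alpha> * Re w)\<^sup>2 + (\<alpha> * Im w)\<^sup>2"
  proof -
    have "(Re w)\<^sup>2 + (Im w)\<^sup>2 < 1"
      using assms(1) by (simp add: cmod_def)
    then have "0 \<le> (1 - \<alpha>\<^sup>2) * (1 - ((Re w)\<^sup>2 + (Im w)\<^sup>2))"
      using assms(2,3) by (intro mult_nonneg_nonneg) (auto simp: power_le_one)
    then show ?thesis
      by (simp add: power2_eq_square algebra_simps)
  qed
  also have "\<dots> = (norm (1 - of_real \<alpha> * w))\<^sup>2"
    by (simp add: cmod_power2)
  finally have "norm (of_real \<alpha> - w) \<le> norm (1 - of_real \<alpha> * w)"
    by (rule power2_le_imp_le) simp
  then show ?thesis
    by (simp add: blaschke_def norm_divide divide_le_eq_1)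
qed

lemma blaschke_in_classB:
  assumes "\<gamma> < 1" "0 \<le> \<alpha>" "\<alpha> < 1"
  defines "c \<equiv> complex_of_real (\<gamma> / (1 - \<gamma>))"
  shows "(\<lambda>z. blaschke \<alpha> (of_real (1 - \<gamma>) * (z + c))) \<in> classB \<gamma>"
    and "\<forall>z\<in>Omega \<gamma>. (\<lambda>n. blaschke_coeff \<alpha> n * of_real ((1 - \<gamma>) ^ n) * (z + c) ^ n)
           sums blaschke \<alpha> (of_real (1 - \<gamma>) * (z + c))"
proof -
  have disk: "norm (of_real (1 - \<gamma>) * (z + c)) < 1" if "z \<in> Omega \<gamma>" for z
    using that mem_Omega_iff[OF assms(1)] by (simp add: c_def)
  have "1 - of_real \<alpha> * (of_real (1 - \<gamma>) * (z + c)) \<noteq> 0" if "z \<in> Omega \<gamma>" for z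
    using norm_of_real_mult_lt_1[OF disk[OF that] assms(2,3)] by auto
  then have "(\<lambda>z. blaschke \<alpha> (of_real (1 - \<gamma>) * (z + c))) holomorphic_on Omega \<gamma>"
    unfolding blaschke_def by (intro holomorphic_intros) auto
  then show "(\<lambda>z. blaschke \<alpha> (of_real (1 - \<gamma>) * (z + c))) \<in> classB \<gamma>"
    using norm_blaschke_le_1[OF disk assms(2,3)]
    by (simp add: classB_def analytic_on_open Omega_def)
  show "\<forall>z\<in>Omega \<gamma>. (\<lambda>n. blaschke_coeff \<alpha> n * of_real ((1 - \<gamma>) ^ n) * (z + c) ^ n)
          sums blaschke \<alpha> (of_real (1 - \<gamma>) * (z + c))"
    using blaschke_sums[OF disk assms(2,3)] by (simp add: power_mult_distrib mult.assoc)
qed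

lemma Cf_blaschke_ge:
  assumes "\<gamma> < 1" "0 < \<alpha>" "\<alpha> < 1" "0 < \<rho>" "\<rho> < 1"
  shows "\<alpha> * log_ratio \<rho> + (1 - \<alpha>\<^sup>2) * (1 / (1 - \<rho> * \<alpha>) - log_ratio (\<rho> * \<alpha>))
           \<le> Cf \<gamma> (\<lambda>n. blaschke_coeff \<alpha> n * of_real ((1 - \<gamma>) ^ n)) \<rho>"
proof -
  define \<beta> where "\<beta> k = norm (blaschke_coeff \<alpha> k)" for k
  have \<beta>_eq: "norm (blaschke_coeff \<alpha> k * of_real ((1 - \<gamma>) ^ k)) / (1 - \<gamma>) ^ k = \<beta> k" for k
    using assms(1) by (simp only: \<beta>_def norm_mult norm_of_real) simp
  have "0 \<le> 1 - \<alpha>\<^sup>2"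
    using assms(2,3) by (simp add: power_le_one)
  have \<beta>_0: "\<beta> 0 = \<alpha>"
    using assms(2) by (simp add: \<beta>_def blaschke_coeff_def)
  have \<beta>_Suc: "\<beta> (Suc m) = (1 - \<alpha>\<^sup>2) * \<alpha> ^ m" for m
    using assms(2) \<open>0 \<le> 1 - \<alpha>\<^sup>2\<close>
    by (simp only: \<beta>_def blaschke_coeff_def nat.case norm_minus_cancel norm_of_real) simp
  have "\<beta> k \<le> 1" for k
    using assms(2,3) \<open>0 \<le> 1 - \<alpha>\<^sup>2\<close>
    by (cases k) (auto simp: \<beta>_0 \<beta>_Suc intro!: mult_le_one power_le_one)
  moreover have "\<alpha> + (1 - \<alpha>\<^sup>2) * real n * \<alpha> ^ n \<le> (\<Sum>k\<le>n. \<beta> k)" for n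
  proof (induction n)
    case (Suc n)
    have "(1 - \<alpha>\<^sup>2) * real (Suc n) * \<alpha> ^ Suc n \<le> (1 - \<alpha>\<^sup>2) * real (Suc n) * \<alpha> ^ n"
      using assms(2,3) \<open>0 \<le> 1 - \<alpha>\<^sup>2\<close> by (intro mult_left_mono) (auto simp: power_decreasing_iff)
    also have "\<dots> = (1 - \<alpha>\<^sup>2) * real n * \<alpha> ^ n + \<beta> (Suc n)"
      by (simp add: \<beta>_Suc algebra_simps)
    finally show ?case
      using Suc by simp
  qed (simp add: \<beta>_0)
  ultimately show ?thesis
    unfolding Cf_def \<beta>_eq using assms(2-5)
    by (intro Cesaro_series_ge) (simp_all add: \<beta>_def)
qed

lemma exists_blaschke_parameter:
  assumes "0 < \<rho>" "\<rho> < 1" "3 * log_ratio \<rho> < 2 / (1 - \<rho>)"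
  obtains \<alpha> where "0 < \<alpha>" "\<alpha> < 1"
    and "log_ratio \<rho> < \<alpha> * log_ratio \<rho> + (1 - \<alpha>\<^sup>2) * (1 / (1 - \<rho> * \<alpha>) - log_ratio (\<rho> * \<alpha>))"
proof -
  define F where "F \<alpha> = (1 + \<alpha>) * (1 / (1 - \<rho> * \<alpha>) - log_ratio (\<rho> * \<alpha>)) - log_ratio \<rho>" for \<alpha>
  have "(F \<longlongrightarrow> F 1) (at_left 1)"
    unfolding F_def log_ratio_def using assms(1,2)
    by (intro tendsto_intros) (auto simp: field_simps)
  moreover have "0 < F 1"
    using assms(3) by (simp add: F_def)
  ultimately have "\<forall>\<^sub>F \<alpha> in at_left 1. 0 < F \<alpha> \<and> \<alpha> \<in> {0<..<1}"
    using eventually_at_left_real[of 0 "1::real"] by (intro eventually_conj order_tendstoD(1)) auto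
  then obtain \<alpha> where "0 < F \<alpha>" "0 < \<alpha>" "\<alpha> < 1"
    using eventually_happens'[of "at_left (1::real)"] by force
  moreover have "\<alpha> * log_ratio \<rho> + (1 - \<alpha>\<^sup>2) * (1 / (1 - \<rho> * \<alpha>) - log_ratio (\<rho> * \<alpha>))
                   = log_ratio \<rho> + (1 - \<alpha>) * F \<alpha>"
    by (simp add: F_def power2_eq_square algebra_simps)
  ultimately show ?thesis
    by (intro that) auto
qed

lemma exists_classB_Cf_gt_log_ratio:
  assumes "\<gamma> < 1" "rho0 < \<rho>" "\<rho> < 1"
  shows "\<exists>f a. f \<in> classB \<gamma> \<and>
           (\<forall>z\<in>Omega \<gamma>. (\<lambda>n. a n * (z + of_real (\<gamma> / (1 - \<gamma>))) ^ n) sums f z) \<and>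
           log_ratio \<rho> < Cf \<gamma> a \<rho>"
proof -
  have "0 < \<rho>"
    using assms(2) rho0_root(1) by linarith
  then have "3 * log_ratio \<rho> < 2 / (1 - \<rho>)"
    using log_ratio_bound_iff_le_rho0[of \<rho>] assms(2,3) by linarith
  then obtain \<alpha> where "0 < \<alpha>" "\<alpha> < 1"
    and "log_ratio \<rho> < \<alpha> * log_ratio \<rho> + (1 - \<alpha>\<^sup>2) * (1 / (1 - \<rho> * \<alpha>) - log_ratio (\<rho> * \<alpha>))"
    using exists_blaschke_parameter \<open>0 < \<rho>\<close> assms(3) by blast
  then show ?thesis
    using blaschke_in_classB[OF assms(1), of \<alpha>] Cf_blaschke_ge[OF assms(1) _ _ \<open>0 < \<rho>\<close> assms(3)]
    by (intro exI[of _ "\<lambda>z. blaschke \<alpha> (of_real (1 - \<gamma>) * (z + of_real (\<gamma> / (1 - \<gamma>))))"]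
        exI[of _ "\<lambda>n. blaschke_coeff \<alpha> n * of_real ((1 - \<gamma>) ^ n)"]) force
qed

theorem theorem1:
  fixes \<gamma> :: real
  assumes "0 \<le> \<gamma>" and "\<gamma> < 1"
  shows "(\<forall>f a \<rho>. f \<in> classB \<gamma> \<longrightarrow>
            (\<forall>z\<in>Omega \<gamma>. (\<lambda>n. a n * (z + complex_of_real (\<gamma> / (1 - \<gamma>))) ^ n) sums f z) \<longrightarrow>
            0 < \<rho> \<longrightarrow> \<rho> \<le> rho0 \<longrightarrow>
            Cf \<gamma> a \<rho> \<le> (1 / \<rho>) * ln (1 / (1 - \<rho>)))
       \<and> (\<forall>\<rho>. rho0 < \<rho> \<longrightarrow> \<rho> < 1 \<longrightarrow>
            (\<exists>f a. f \<in> classB \<gamma> \<and>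
               (\<forall>z\<in>Omega \<gamma>. (\<lambda>n. a n * (z + complex_of_real (\<gamma> / (1 - \<gamma>))) ^ n) sums f z) \<and>
               Cf \<gamma> a \<rho> > (1 / \<rho>) * ln (1 / (1 - \<rho>))))"
  using Cf_le_log_ratio[OF assms(2)] exists_classB_Cf_gt_log_ratio[OF assms(2)]
  unfolding log_ratio_def by blast

end
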